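(* Assume $\Phi^{y,\mathrm{app}}\in L^1_{\mu_\theta}$ and $\Phi^{y,\mathrm{joint}}\in L^1_{\mu_\theta\otimes\mu_\delta}$. Then $$\max\{d_{\mathrm{KL}}(\mu^{y,\mathrm{app}}_{\theta,\delta}\Vert\mu^{y,\mathrm{joint}}_{\theta,\delta}),d_{\mathrm{KL}}(\mu^{y,\mathrm{joint}}_{\theta,\delta}\Vert\mu^{y,\mathrm{app}}_{\theta,\delta})\}\le C\Big\|\,|\mathcal{O}\delta(\theta)|^2_{\Sigma_\varepsilon^{-1}}\Big\|^{1/2}_{L^1_{\mathbb{P}}},$$ where $C=2^{1/2}\exp\big(2\|\Phi^{y,\mathrm{joint}}\|_{L^1_{\mu_\theta\otimes\mu_\delta}}+2\|\Phi^{y,\mathrm{app}}\|_{L^1_{\mu_\theta}}\big)\big(\|\Phi^{y,\mathrm{joint}}\|^{1/2}_{L^1_{\mu_\theta\otimes\mu_\delta}}+\|\Phi^{y,\mathrm{app}}\|^{1/2}_{L^1_{\mu_\theta}}\big)$.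
   Context: Let $\Theta$ be a Borel subset of a separable Banach space and $\mu_\theta$ a Borel probability measure on $\Theta$. Let $\mathcal{U}$ be a Banach space, $n\in\mathbb{N}$, $\mathcal{O}:\mathcal{U}\to\mathbb{R}^n$ continuous linear, $\mathcal{M}:\Theta\to\mathcal{U}$ measurable. Let $\Sigma_\varepsilon\in\mathbb{R}^{n\times n}$ be symmetric positive definite, $y\in\mathbb{R}^n$ fixed, $|a|_L:=(a^\top La)^{1/2}$. Let $\Delta$ be a Radon space whose elements $\delta'$ are maps $\Theta\to\mathcal{U}$ with $(\theta',\delta')\mapsto\delta'(\theta')$ jointly measurable, and $\mu_\delta$ a Borel probability measure on $\Delta$. Misfits: $\Phi^{y,\mathrm{app}}(\theta')=\tfrac12|y-\mathcal{O}\mathcal{M}(\theta')|^2_{\Sigma_\varepsilon^{-1}}$, lifted by $\Phi^{y,\mathrm{app}}(\theta',\delta'):=\Phi^{y,\mathrm{app}}(\theta')$; $\Phi^{y,\mathrm{joint}}(\theta',\delta')=\tfrac12|y-\mathcal{O}\mathcal{M}(\theta')-\mathcal{O}\delta'(\theta')|^2_{\Sigma_\varepsilon^{-1}}$. For a probability measure $\mu$ and measurable $\Phi\ge0$, $\mu_\Phi$ has density $\exp(-\Phi)/\int\exp(-\Phi)d\mu$ w.r.t. $\mu$. $\mu^{y,\mathrm{app}}_{\theta,\delta}:=(\mu_\theta\otimes\mu_\delta)_{\Phi^{y,\mathrm{app}}}$, $\mu^{y,\mathrm{joint}}_{\theta,\delta}:=(\mu_\theta\otimes\mu_\delta)_{\Phi^{y,\mathrm{joint}}}$.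 $\theta\sim\mu_\theta$, $\delta\sim\mu_\delta$ independent under $\mathbb{P}$, so $\|F(\theta,\delta)\|_{L^1_{\mathbb{P}}}=\int|F|\,d(\mu_\theta\otimes\mu_\delta)$. $d_{\mathrm{KL}}(\mu\Vert\nu)=\int\log\frac{d\mu}{d\nu}d\mu$ if $\mu\ll\nu$, $+\infty$ otherwise. *)

theory Defs
  imports "HOL-Probability.Probability"
begin

definition wnorm2 :: "real^'n^'n \<Rightarrow> real^'n \<Rightarrow> real" where
  "wnorm2 L a = a \<bullet> (L *v a)"

definition reweight :: "'a measure \<Rightarrow> ('a \<Rightarrow> real) \<Rightarrow> 'a measure" where
  "reweight \<mu> \<Phi> = density \<mu> (\<lambda>x. ennreal (exp (- \<Phi> x) / (\<integral>z. exp (- \<Phi> z) \<partial>\<mu>)))"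

definition KL_div :: "'a measure \<Rightarrow> 'a measure \<Rightarrow> ereal" where
  "KL_div \<mu> \<nu> =
    (if sets \<mu> = sets \<nu> \<and> absolutely_continuous \<nu> \<mu> then
       enn2ereal (\<integral>\<^sup>+ x. ennreal (ln (enn2real (RN_deriv \<nu> \<mu> x))) \<partial>\<mu>)
     - enn2ereal (\<integral>\<^sup>+ x. ennreal (- ln (enn2real (RN_deriv \<nu> \<mu> x))) \<partial>\<mu>)
     else \<infinity>)"

definition radon_space :: "'d::t2_space itself \<Rightarrow> bool" where
  "radon_space _ \<longleftrightarrow>
    (\<forall>\<mu>::'d measure. sets \<mu> = sets borel \<and> prob_space \<mu> \<longrightarrow>
       (\<forall>B\<in>sets borel. emeasure \<mu> B = (SUP K\<in>{K. K \<subseteq> B \<and> compact K}. emeasure \<mu> K)))"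

end

theory Submission
  imports Defs
begin

text \<open>Both posteriors reweight the same prior by \<open>exp (- \<Phi>)\<close> with \<open>\<Phi> \<ge> 0\<close>. For two such
  reweightings the log-density ratio is \<open>\<Phi>\<^sub>g - \<Phi>\<^sub>f + ln (Z\<^sub>g / Z\<^sub>f)\<close>; since \<open>exp (- t)\<close> is
  1-Lipschitz on \<open>t \<ge> 0\<close> and Jensen gives \<open>Z\<^sub>f \<ge> exp (- \<integral>\<Phi>\<^sub>f)\<close>, the divergence is at most
  \<open>2 exp (\<integral>\<Phi>\<^sub>f) \<parallel>\<Phi>\<^sub>f - \<Phi>\<^sub>g\<parallel>\<^sub>1\<close>. The two misfits differ by a difference of squared weighted
  norms, \<open>|q(a - b) - q(a)| \<le> \<surd>q(b) (\<surd>q(a - b) + \<surd>q(a))\<close> by the reverse triangle inequality,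
  and Cauchy-Schwarz bounds the integral of the right-hand side by \<open>sqrt \<parallel>q(\<O>\<delta>)\<parallel>\<^sub>1\<close> times the
  square roots of the misfit norms.\<close>

text \<open>The polar form of \<open>wnorm2 L\<close>, symmetrised because \<open>L\<close> need not be symmetric.\<close>

definition winner :: "real^'n^'n \<Rightarrow> real^'n \<Rightarrow> real^'n \<Rightarrow> real" where
  "winner L x z = (x \<bullet> (L *v z) + z \<bullet> (L *v x)) / 2"

lemma wnorm2_add: "wnorm2 L (x + z) = wnorm2 L x + 2 * winner L x z + wnorm2 L z"
  unfolding wnorm2_def winner_def
  by (simp add: matrix_vector_right_distrib inner_add_left inner_add_right algebra_simps)

lemma wnorm2_scaleR: "wnorm2 L (t *\<^sub>R x) = t\<^sup>2 * wnorm2 L x"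
  unfolding wnorm2_def by (simp add: matrix_vector_mult_scaleR power2_eq_square)

lemma wnorm2_uminus: "wnorm2 L (- x) = wnorm2 L x"
  using wnorm2_scaleR[of L "-1" x] by simp

lemma winner_scaleR_left: "winner L (t *\<^sub>R x) z = t * winner L x z"
  unfolding winner_def by (simp add: matrix_vector_mult_scaleR algebra_simps)

lemma wnorm2_nonneg:
  assumes "\<And>x. x \<noteq> 0 \<Longrightarrow> 0 < wnorm2 L x"
  shows "0 \<le> wnorm2 L x"
  using assms[of x] by (cases "x = 0") (auto simp: wnorm2_def)

lemma winner_le_sqrt_wnorm2:
  assumes pd: "\<And>x. x \<noteq> 0 \<Longrightarrow> 0 < wnorm2 L x"
  shows "winner L x z \<le> sqrt (wnorm2 L x) * sqrt (wnorm2 L z)"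
proof (cases "x = 0")
  case True
  then show ?thesis by (simp add: winner_def wnorm2_def)
next
  case False
  define c where "c = wnorm2 L x"
  define b where "b = winner L x z"
  have c: "0 < c" unfolding c_def using pd[OF False] .
  \<comment> \<open>minimise \<open>wnorm2 L (t *\<^sub>R x + z) \<ge> 0\<close> at \<open>t = - b / c\<close>\<close>
  have "0 \<le> wnorm2 L ((- b / c) *\<^sub>R x + z)" by (rule wnorm2_nonneg[OF pd])
  also have "\<dots> = wnorm2 L z - b\<^sup>2 / c"
    unfolding wnorm2_add wnorm2_scaleR winner_scaleR_left b_def[symmetric] c_def[symmetric]
    using c by (simp add: field_simps power2_eq_square)
  finally have "b\<^sup>2 \<le> c * wnorm2 L z" using c by (simp add: field_simps)
  then have "sqrt (b\<^sup>2) \<le> sqrt (c * wnorm2 L z)" by (rule real_sqrt_le_mono)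
  then show ?thesis by (simp add: b_def c_def real_sqrt_mult)
qed

lemma sqrt_wnorm2_add_le:
  assumes pd: "\<And>x. x \<noteq> 0 \<Longrightarrow> 0 < wnorm2 L x"
  shows "sqrt (wnorm2 L (x + z)) \<le> sqrt (wnorm2 L x) + sqrt (wnorm2 L z)"
proof (rule real_le_lsqrt)
  have "wnorm2 L (x + z) \<le> wnorm2 L x + 2 * (sqrt (wnorm2 L x) * sqrt (wnorm2 L z)) + wnorm2 L z"
    unfolding wnorm2_add using winner_le_sqrt_wnorm2[OF pd, of x z] by linarith
  then show "wnorm2 L (x + z) \<le> (sqrt (wnorm2 L x) + sqrt (wnorm2 L z))\<^sup>2"
    using wnorm2_nonneg[OF pd, of x] wnorm2_nonneg[OF pd, of z] by (simp add: power2_sum)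
qed (simp_all add: wnorm2_nonneg[OF pd])

lemma abs_wnorm2_diff_le:
  assumes pd: "\<And>x. x \<noteq> 0 \<Longrightarrow> 0 < wnorm2 L x"
  shows "\<bar>wnorm2 L (a - b) - wnorm2 L a\<bar>
     \<le> sqrt (wnorm2 L b) * (sqrt (wnorm2 L (a - b)) + sqrt (wnorm2 L a))"
proof -
  let ?N = "\<lambda>v. sqrt (wnorm2 L v)"
  have "?N a \<le> ?N (a - b) + ?N b" using sqrt_wnorm2_add_le[OF pd, of "a - b" b] by simp
  moreover have "?N (a - b) \<le> ?N a + ?N b"
    using sqrt_wnorm2_add_le[OF pd, of a "- b"] by (simp add: wnorm2_uminus)
  ultimately have "\<bar>?N (a - b) - ?N a\<bar> \<le> ?N b" by linarith
  moreover have "wnorm2 L (a - b) - wnorm2 L a = (?N (a - b) - ?N a) * (?N (a - b) + ?N a)"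
    using wnorm2_nonneg[OF pd, of a] wnorm2_nonneg[OF pd, of "a - b"]
    by (simp add: algebra_simps)
  moreover have "0 \<le> ?N (a - b) + ?N a"
    using wnorm2_nonneg[OF pd, of a] wnorm2_nonneg[OF pd, of "a - b"] by simp
  ultimately show ?thesis
    by (simp add: abs_mult mult_right_mono)
qed

lemma wnorm2_matrix_inv_pos:
  fixes S :: "real^'n^'n"
  assumes pd: "\<And>x. x \<noteq> 0 \<Longrightarrow> 0 < x \<bullet> (S *v x)" and "a \<noteq> 0"
  shows "0 < wnorm2 (matrix_inv S) a"
proof -
  have "\<forall>x. S *v x = 0 \<longrightarrow> x = 0"
    using pd by (metis inner_zero_right less_irrefl)
  then have "invertible S"
    using matrix_left_invertible_ker invertible_left_inverse by blast
  then have "S ** matrix_inv S = mat 1"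
    unfolding invertible_def matrix_inv_def by (rule someI2_ex) simp
  define u where "u = matrix_inv S *v a"
  have Su: "S *v u = a" unfolding u_def matrix_vector_mul_assoc
    using \<open>S ** matrix_inv S = mat 1\<close> by simp
  then have "u \<noteq> 0" using \<open>a \<noteq> 0\<close> by auto
  have "wnorm2 (matrix_inv S) a = (S *v u) \<bullet> u"
    unfolding wnorm2_def u_def[symmetric] Su ..
  also have "\<dots> = u \<bullet> (S *v u)" by (rule inner_commute)
  finally show ?thesis using pd[OF \<open>u \<noteq> 0\<close>] by simp
qed

lemma exp_neg_diff_le_abs_diff:
  fixes a b :: real
  assumes "0 \<le> a" "0 \<le> b"
  shows "exp (- b) - exp (- a) \<le> \<bar>a - b\<bar>"
proof (cases "b \<le> a")
  case True
  have "exp (- b) - exp (- a) = exp (- b) * (1 - exp (b - a))"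
    by (simp add: right_diff_distrib flip: exp_add)
  also have "\<dots> \<le> 1 - exp (b - a)"
    using True assms by (intro mult_left_le_one_le) auto
  also have "\<dots> \<le> a - b" using exp_ge_add_one_self[of "b - a"] by linarith
  finally show ?thesis using True by simp
next
  case False
  then have "exp (- b) \<le> exp (- a)" by simp
  with False show ?thesis by linarith
qed

lemma integrable_exp_neg:
  fixes f :: "'a \<Rightarrow> real"
  assumes "finite_measure M" "f \<in> borel_measurable M" "\<And>x. 0 \<le> f x"
  shows "integrable M (\<lambda>x. exp (- f x))"
proof -
  note assms(2)[measurable]
  show ?thesis using assms by (intro finite_measure.integrable_const_bound[where B=1]) auto
qed

lemma (in prob_space) exp_neg_integral_le:
  fixes f :: "'a \<Rightarrow> real"
  assumes f: "integrable M f" "\<And>x. 0 \<le> f x"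
  shows "exp (- (\<integral>x. f x \<partial>M)) \<le> (\<integral>x. exp (- f x) \<partial>M)"
proof -
  define n where "n = (\<integral>x. f x \<partial>M)"
  \<comment> \<open>Jensen's inequality via the tangent line of \<open>exp (- t)\<close> at \<open>t = n\<close>\<close>
  have tangent: "exp (- n) * (1 + (n - f x)) \<le> exp (- f x)" for x
  proof -
    have "exp (- n) * (1 + (n - f x)) \<le> exp (- n) * exp (n - f x)"
      by (rule mult_left_mono) (use exp_ge_add_one_self[of "n - f x"] in linarith, simp)
    then show ?thesis by (simp flip: exp_add)
  qed
  have "exp (- n) = (\<integral>x. exp (- n) * (1 + (n - f x)) \<partial>M)"
    using f by (simp add: n_def prob_space)
  also have "\<dots> \<le> (\<integral>x. exp (- f x) \<partial>M)"
    using f tangent integrable_exp_neg[OF finite_measure_axioms]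
    by (intro integral_mono) auto
  finally show ?thesis unfolding n_def .
qed

lemma KL_div_density_le:
  fixes p q :: "'a \<Rightarrow> real"
  assumes prob: "prob_space (density M p)"
    and [measurable]: "p \<in> borel_measurable M" "q \<in> borel_measurable M"
    and pos: "\<And>x. 0 < p x" "\<And>x. 0 < q x"
  shows "KL_div (density M p) (density M q)
           \<le> enn2ereal (\<integral>\<^sup>+ x. ennreal (p x * ln (p x / q x)) \<partial>M)"
proof -
  define P where "P = density M p"
  define Q where "Q = density M q"
  have sets: "sets P = sets Q" unfolding P_def Q_def by simp
  have ratio: "ennreal (q x) * ennreal (p x / q x) = ennreal (p x)" for x
    using pos[of x] by (simp flip: ennreal_mult)
  have P_eq: "density Q (\<lambda>x. ennreal (p x / q x)) = P"
    unfolding P_def Q_def by (subst density_density_eq) (auto simp: ratio)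
  have ac: "absolutely_continuous Q P"
    unfolding P_eq[symmetric] by (rule absolutely_continuousI_density) (simp add: Q_def)
  have "AE x in Q. ennreal (p x / q x) = RN_deriv Q P x"
    using subprob_space_imp_sigma_finite[OF prob_space_imp_subprob_space[OF prob]]
    by (intro RN_deriv_unique_sigma_finite[OF _ P_eq]) (simp_all add: P_def Q_def)
  then have RN: "AE x in P. RN_deriv Q P x = ennreal (p x / q x)"
    by (intro absolutely_continuous_AE[OF _ ac]) (auto simp: sets)
  have "KL_div P Q \<le> enn2ereal (\<integral>\<^sup>+ x. ennreal (ln (enn2real (RN_deriv Q P x))) \<partial>P)"
    unfolding KL_div_def using sets ac by (simp add: ereal_diff_le_self)
  also have "(\<integral>\<^sup>+ x. ennreal (ln (enn2real (RN_deriv Q P x))) \<partial>P)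
      = (\<integral>\<^sup>+ x. ennreal (ln (p x / q x)) \<partial>P)"
    using RN by (intro nn_integral_cong_AE, elim AE_mp) (auto intro!: AE_I2 simp: pos less_imp_le)
  also have "\<dots> = (\<integral>\<^sup>+ x. ennreal (p x) * ennreal (ln (p x / q x)) \<partial>M)"
    unfolding P_def using pos by (intro nn_integral_density) auto
  also have "\<dots> = (\<integral>\<^sup>+ x. ennreal (p x * ln (p x / q x)) \<partial>M)"
    using pos by (intro nn_integral_cong) (simp add: ennreal_mult' less_imp_le)
  finally show ?thesis unfolding P_def Q_def .
qed

lemma (in prob_space) prob_space_reweight:
  fixes f :: "'a \<Rightarrow> real"
  assumes f: "integrable M f" "\<And>x. 0 \<le> f x"
  shows "prob_space (reweight M f)"
proof (rule prob_spaceI)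
  have [measurable]: "f \<in> borel_measurable M" using f by auto
  define Z where "Z = (\<integral>x. exp (- f x) \<partial>M)"
  have Z: "0 < Z"
    unfolding Z_def using exp_neg_integral_le[OF f] by (meson exp_gt_zero less_le_trans)
  have int_exp: "integrable M (\<lambda>x. exp (- f x))"
    by (rule integrable_exp_neg[OF finite_measure_axioms _ f(2)]) simp
  have "emeasure (reweight M f) (space (reweight M f)) = (\<integral>\<^sup>+ x. ennreal (exp (- f x) / Z) \<partial>M)"
    unfolding reweight_def Z_def[symmetric]
    by (subst emeasure_density) (auto intro!: nn_integral_cong)
  also have "\<dots> = ennreal (Z / Z)"
    using int_exp Z by (subst nn_integral_eq_integral) (auto simp: Z_def)
  finally show "emeasure (reweight M f) (space (reweight M f)) = 1" using Z by simp
qed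

lemma (in prob_space) ln_normaliser_ratio_le:
  fixes f g :: "'a \<Rightarrow> real"
  assumes f: "integrable M f" "\<And>x. 0 \<le> f x"
    and g: "integrable M g" "\<And>x. 0 \<le> g x"
  shows "ln ((\<integral>x. exp (- g x) \<partial>M) / (\<integral>x. exp (- f x) \<partial>M))
           \<le> (\<integral>x. \<bar>f x - g x\<bar> \<partial>M) / (\<integral>x. exp (- f x) \<partial>M)"
proof -
  define Z1 where "Z1 = (\<integral>x. exp (- f x) \<partial>M)"
  define Z2 where "Z2 = (\<integral>x. exp (- g x) \<partial>M)"
  have Z1: "0 < Z1"
    unfolding Z1_def using exp_neg_integral_le[OF f] by (meson exp_gt_zero less_le_trans)
  have Z2: "0 < Z2"
    unfolding Z2_def using exp_neg_integral_le[OF g] by (meson exp_gt_zero less_le_trans)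
  have int_exp: "integrable M (\<lambda>x. exp (- f x))" "integrable M (\<lambda>x. exp (- g x))"
    using f g by (auto intro: integrable_exp_neg[OF finite_measure_axioms])
  have "Z2 - Z1 = (\<integral>x. exp (- g x) - exp (- f x) \<partial>M)"
    unfolding Z1_def Z2_def using int_exp by simp
  also have "\<dots> \<le> (\<integral>x. \<bar>f x - g x\<bar> \<partial>M)"
    using int_exp f g exp_neg_diff_le_abs_diff by (intro integral_mono) auto
  finally have "(Z2 - Z1) / Z1 \<le> (\<integral>x. \<bar>f x - g x\<bar> \<partial>M) / Z1"
    using Z1 by (simp add: divide_right_mono)
  moreover have "Z2 / Z1 - 1 = (Z2 - Z1) / Z1" using Z1 by (simp add: field_simps)
  moreover have "ln (Z2 / Z1) \<le> Z2 / Z1 - 1" using Z1 Z2 by (intro ln_le_minus_one) simp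
  ultimately show ?thesis unfolding Z1_def Z2_def by linarith
qed

lemma (in prob_space) KL_div_reweight_le:
  fixes f g :: "'a \<Rightarrow> real"
  assumes f: "integrable M f" "\<And>x. 0 \<le> f x"
    and g: "integrable M g" "\<And>x. 0 \<le> g x"
  shows "KL_div (reweight M f) (reweight M g)
           \<le> ereal (2 * exp (\<integral>x. f x \<partial>M) * (\<integral>x. \<bar>f x - g x\<bar> \<partial>M))"
proof -
  have [measurable]: "f \<in> borel_measurable M" "g \<in> borel_measurable M" using f g by auto
  define Z1 where "Z1 = (\<integral>x. exp (- f x) \<partial>M)"
  define Z2 where "Z2 = (\<integral>x. exp (- g x) \<partial>M)"
  define D where "D = (\<integral>x. \<bar>f x - g x\<bar> \<partial>M)"
  have Z1_ge: "exp (- (\<integral>x. f x \<partial>M)) \<le> Z1"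
    unfolding Z1_def using f by (rule exp_neg_integral_le)
  then have Z1: "0 < Z1" by (meson exp_gt_zero less_le_trans)
  have Z2: "0 < Z2"
    unfolding Z2_def using exp_neg_integral_le[OF g] by (meson exp_gt_zero less_le_trans)
  have D: "0 \<le> D" unfolding D_def by simp
  have int_D: "integrable M (\<lambda>x. \<bar>f x - g x\<bar>)" using f g by auto
  have ln_Z: "ln (Z2 / Z1) \<le> D / Z1"
    unfolding Z1_def Z2_def D_def by (rule ln_normaliser_ratio_le[OF f g])
  define p where "p x = exp (- f x) / Z1" for x
  define q where "q x = exp (- g x) / Z2" for x
  have p: "0 < p x" "p x \<le> 1 / Z1" for x
    using Z1 f(2)[of x] unfolding p_def by (auto intro: divide_right_mono)
  have q: "0 < q x" for x using Z2 by (simp add: q_def)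
  have [measurable]: "p \<in> borel_measurable M" "q \<in> borel_measurable M"
    unfolding p_def q_def by measurable
  have int_p: "integrable M p"
    unfolding p_def using integrable_exp_neg[OF finite_measure_axioms _ f(2)] by simp
  have integral_p: "(\<integral>x. p x \<partial>M) = 1"
    unfolding p_def using Z1 by (simp add: Z1_def[symmetric])
  have prob: "prob_space (density M p)"
    using prob_space_reweight[OF f] unfolding reweight_def p_def Z1_def .
  have pointwise: "p x * ln (p x / q x) \<le> \<bar>f x - g x\<bar> / Z1 + p x * (D / Z1)" for x
  proof -
    have "ln (p x / q x) = g x - f x + ln (Z2 / Z1)"
      using Z1 Z2 by (simp add: p_def q_def ln_div ln_mult divide_divide_eq_left)
    also have "\<dots> \<le> \<bar>f x - g x\<bar> + D / Z1" using ln_Z by linarith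
    finally have "p x * ln (p x / q x) \<le> p x * (\<bar>f x - g x\<bar> + D / Z1)"
      using p(1)[of x] by (intro mult_left_mono) auto
    moreover have "p x * \<bar>f x - g x\<bar> \<le> \<bar>f x - g x\<bar> / Z1"
      using mult_right_mono[OF p(2), of "\<bar>f x - g x\<bar>"] by simp
    ultimately show ?thesis by (simp add: distrib_left)
  qed
  have "KL_div (reweight M f) (reweight M g)
      \<le> enn2ereal (\<integral>\<^sup>+ x. ennreal (p x * ln (p x / q x)) \<partial>M)"
    unfolding reweight_def p_def[symmetric] q_def[symmetric] Z1_def[symmetric] Z2_def[symmetric]
    using prob p q by (intro KL_div_density_le) auto
  also have "\<dots> \<le> enn2ereal (\<integral>\<^sup>+ x. ennreal (\<bar>f x - g x\<bar> / Z1 + p x * (D / Z1)) \<partial>M)"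
    using pointwise by (simp add: less_eq_ennreal.rep_eq[symmetric] nn_integral_mono ennreal_leI)
  also have "(\<integral>\<^sup>+ x. ennreal (\<bar>f x - g x\<bar> / Z1 + p x * (D / Z1)) \<partial>M) = ennreal (2 * D / Z1)"
    using int_D int_p integral_p p Z1 D
    by (subst nn_integral_eq_integral) (auto simp: D_def[symmetric] add_divide_distrib less_imp_le)
  also have "enn2ereal (ennreal (2 * D / Z1)) = ereal (2 * D / Z1)"
    using D Z1 by simp
  also have "2 * D / Z1 \<le> 2 * exp (\<integral>x. f x \<partial>M) * D"
    using Z1_ge Z1 D by (simp add: field_simps exp_minus mult_left_mono)
  finally show ?thesis unfolding D_def by simp
qed

lemma sqrt_mult_le_weighted_mean:
  fixes a b s :: real
  assumes "0 \<le> a" "0 \<le> b" "0 < s"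
  shows "sqrt a * sqrt b \<le> (s * a + b / s) / 2"
proof -
  have "sqrt a * sqrt b = sqrt ((s * a) * (b / s))"
    using assms by (simp add: real_sqrt_mult)
  also have "\<dots> \<le> (s * a + b / s) / 2"
    using assms by (intro arith_geo_mean_sqrt) auto
  finally show ?thesis .
qed

lemma integrable_sqrt_mult:
  fixes u v :: "'a \<Rightarrow> real"
  assumes u: "integrable M u" "\<And>x. 0 \<le> u x" and v: "integrable M v" "\<And>x. 0 \<le> v x"
  shows "integrable M (\<lambda>x. sqrt (u x) * sqrt (v x))"
proof (rule Bochner_Integration.integrable_bound)
  show "integrable M (\<lambda>x. (u x + v x) / 2)" using u v by simp
  show "(\<lambda>x. sqrt (u x) * sqrt (v x)) \<in> borel_measurable M" using u v by measurable
  show "AE x in M. norm (sqrt (u x) * sqrt (v x)) \<le> norm ((u x + v x) / 2)"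
    using arith_geo_mean_sqrt[OF u(2) v(2)] u(2) v(2) by (auto simp: real_sqrt_mult)
qed

lemma integral_sqrt_mult_le:
  fixes u v :: "'a \<Rightarrow> real"
  assumes u: "integrable M u" "\<And>x. 0 \<le> u x" and v: "integrable M v" "\<And>x. 0 \<le> v x"
  shows "(\<integral>x. sqrt (u x) * sqrt (v x) \<partial>M) \<le> sqrt (\<integral>x. u x \<partial>M) * sqrt (\<integral>x. v x \<partial>M)"
proof -
  define A where "A = (\<integral>x. u x \<partial>M)"
  define B where "B = (\<integral>x. v x \<partial>M)"
  have AB: "0 \<le> A" "0 \<le> B" using u v by (simp_all add: A_def B_def)
  then consider "A = 0 \<or> B = 0" | "0 < A" "0 < B" by fastforce
  then show ?thesis
  proof cases
    case 1
    then have "AE x in M. u x = 0 \<or> v x = 0"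
      using u v by (auto simp: A_def B_def integral_nonneg_eq_0_iff_AE elim: AE_mp)
    then have "(\<integral>x. sqrt (u x) * sqrt (v x) \<partial>M) = 0"
      by (intro integral_eq_zero_AE) auto
    then show ?thesis using AB by (simp add: A_def B_def)
  next
    case 2
    define s where "s = sqrt B / sqrt A"
    have s: "0 < s" using 2 by (simp add: s_def)
    have "(\<integral>x. sqrt (u x) * sqrt (v x) \<partial>M) \<le> (\<integral>x. (s * u x + v x / s) / 2 \<partial>M)"
      using u v integrable_sqrt_mult[OF u v] sqrt_mult_le_weighted_mean[OF u(2) v(2) s]
      by (intro integral_mono) auto
    also have "\<dots> = (s * A + B / s) / 2" using u v by (simp add: A_def B_def)
    also have "\<dots> = sqrt A * sqrt B"
      using 2 by (simp add: s_def field_simps real_sqrt_mult[symmetric] power2_eq_square)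
    finally show ?thesis unfolding A_def B_def .
  qed
qed

lemma abs_half_wnorm2_diff_le:
  assumes pd: "\<And>x. x \<noteq> 0 \<Longrightarrow> 0 < wnorm2 L x"
  shows "\<bar>wnorm2 L (a - b) / 2 - wnorm2 L a / 2\<bar>
     \<le> sqrt (wnorm2 L b) * (sqrt (wnorm2 L (a - b) / 2) + sqrt (wnorm2 L a / 2)) / sqrt 2"
proof -
  have "\<bar>wnorm2 L (a - b) / 2 - wnorm2 L a / 2\<bar> = \<bar>wnorm2 L (a - b) - wnorm2 L a\<bar> / 2"
    by (simp add: abs_divide flip: diff_divide_distrib)
  also have "\<dots> \<le> sqrt (wnorm2 L b) * (sqrt (wnorm2 L (a - b)) + sqrt (wnorm2 L a)) / 2"
    by (simp add: divide_right_mono abs_wnorm2_diff_le[OF pd])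
  also have "\<dots> = sqrt (wnorm2 L b) * (sqrt (wnorm2 L (a - b) / 2) + sqrt (wnorm2 L a / 2)) / sqrt 2"
    by (simp add: real_sqrt_divide field_simps)
  finally show ?thesis .
qed

lemma (in prob_space) max_KL_div_reweight_le:
  fixes f g F :: "'a \<Rightarrow> real"
  assumes f: "integrable M f" "\<And>x. 0 \<le> f x"
    and g: "integrable M g" "\<And>x. 0 \<le> g x"
    and F: "integrable M F" "\<And>x. 0 \<le> F x"
    and close: "\<And>x. \<bar>f x - g x\<bar> \<le> sqrt (F x) * (sqrt (f x) + sqrt (g x)) / sqrt 2"
  shows "max (KL_div (reweight M f) (reweight M g)) (KL_div (reweight M g) (reweight M f))
    \<le> ereal (sqrt 2 * exp (2 * (\<integral>x. f x \<partial>M) + 2 * (\<integral>x. g x \<partial>M))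
              * (sqrt (\<integral>x. f x \<partial>M) + sqrt (\<integral>x. g x \<partial>M)) * sqrt (\<integral>x. F x \<partial>M))"
proof -
  define nf where "nf = (\<integral>x. f x \<partial>M)"
  define ng where "ng = (\<integral>x. g x \<partial>M)"
  define nF where "nF = (\<integral>x. F x \<partial>M)"
  define D where "D = (\<integral>x. \<bar>f x - g x\<bar> \<partial>M)"
  define C where "C = sqrt 2 * exp (2 * nf + 2 * ng) * (sqrt nf + sqrt ng)"
  have D: "0 \<le> D" unfolding D_def by simp
  have "D \<le> (\<integral>x. (sqrt (F x) * sqrt (f x) + sqrt (F x) * sqrt (g x)) / sqrt 2 \<partial>M)"
    unfolding D_def using close f g integrable_sqrt_mult[OF F f] integrable_sqrt_mult[OF F g]
    by (intro integral_mono) (auto simp: distrib_left)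
  also have "\<dots> = ((\<integral>x. sqrt (F x) * sqrt (f x) \<partial>M) + (\<integral>x. sqrt (F x) * sqrt (g x) \<partial>M)) / sqrt 2"
    using integrable_sqrt_mult[OF F f] integrable_sqrt_mult[OF F g] by simp
  also have "\<dots> \<le> (sqrt nF * sqrt nf + sqrt nF * sqrt ng) / sqrt 2"
    using integral_sqrt_mult_le[OF F f] integral_sqrt_mult_le[OF F g]
    by (intro divide_right_mono add_mono) (auto simp: nf_def ng_def nF_def)
  finally have "D * sqrt 2 \<le> sqrt nF * (sqrt nf + sqrt ng)"
    by (simp add: field_simps)
  then have "sqrt 2 * (D * sqrt 2) \<le> sqrt 2 * (sqrt nF * (sqrt nf + sqrt ng))"
    by (rule mult_left_mono) simp
  then have "2 * D \<le> sqrt 2 * (sqrt nF * (sqrt nf + sqrt ng))"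
    by (simp add: mult.left_commute)
  then have bound: "2 * exp m * D \<le> C * sqrt nF" if "m \<le> 2 * nf + 2 * ng" for m
  proof -
    have "2 * exp m * D \<le> exp (2 * nf + 2 * ng) * (2 * D)"
      using that D by (simp add: mult_right_mono)
    also have "\<dots> \<le> exp (2 * nf + 2 * ng) * (sqrt 2 * (sqrt nF * (sqrt nf + sqrt ng)))"
      using \<open>2 * D \<le> _\<close> by (rule mult_left_mono) simp
    finally show ?thesis by (simp add: C_def algebra_simps)
  qed
  have "0 \<le> nf" "0 \<le> ng" using f g by (simp_all add: nf_def ng_def)
  then have "KL_div (reweight M f) (reweight M g) \<le> ereal (C * sqrt nF)"
    and "KL_div (reweight M g) (reweight M f) \<le> ereal (C * sqrt nF)"
    using KL_div_reweight_le[OF f g] KL_div_reweight_le[OF g f] bound[of nf] bound[of ng]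
    by (auto simp: D_def nf_def ng_def abs_minus_commute intro: order_trans)
  then show ?thesis by (simp add: C_def nf_def ng_def nF_def)
qed

lemma (in prob_space)
  fixes h :: "'b \<Rightarrow> real"
  assumes "integrable N h"
  shows integrable_pair_fst: "integrable (N \<Otimes>\<^sub>M M) (\<lambda>z. h (fst z))"
    and integral_pair_fst: "(\<integral>z. h (fst z) \<partial>(N \<Otimes>\<^sub>M M)) = (\<integral>t. h t \<partial>N)"
proof -
  have fst: "fst \<in> measurable (N \<Otimes>\<^sub>M M) N" by simp
  have h: "h \<in> borel_measurable N" using assms by simp
  show "integrable (N \<Otimes>\<^sub>M M) (\<lambda>z. h (fst z))"
    using integrable_distr_eq[OF fst h] assms by (simp add: distr_pair_fst)
  show "(\<integral>z. h (fst z) \<partial>(N \<Otimes>\<^sub>M M)) = (\<integral>t. h t \<partial>N)"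
    using integral_distr[OF fst h] by (simp add: distr_pair_fst)
qed

theorem mainTheorem11:
  fixes \<Theta> :: "'a::{banach, second_countable_topology} set"
    and \<mu>\<theta> :: "'a measure"
    and \<mu>\<delta> :: "'d::t2_space measure"
    and ev :: "'d \<Rightarrow> 'a \<Rightarrow> 'u::banach"
    and \<O> :: "'u \<Rightarrow> real^'n"
    and \<M> :: "'a \<Rightarrow> 'u"
    and \<Sigma> :: "real^'n^'n"
    and y :: "real^'n"
    and \<Phi>app :: "'a \<Rightarrow> real"
    and \<Phi>joint :: "'a \<times> 'd \<Rightarrow> real"
  assumes \<Theta>_borel: "\<Theta> \<in> sets borel"
    and sets_\<mu>\<theta>: "sets \<mu>\<theta> = sets (restrict_space borel \<Theta>)"
    and prob_\<theta>: "prob_space \<mu>\<theta>"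
    and radon: "radon_space TYPE('d)"
    and sets_\<mu>\<delta>: "sets \<mu>\<delta> = sets borel"
    and prob_\<delta>: "prob_space \<mu>\<delta>"
    and ev_maps: "\<And>d1 d2. (\<forall>t\<in>\<Theta>. ev d1 t = ev d2 t) \<Longrightarrow> d1 = d2"
    and ev_meas: "(\<lambda>(t, d). ev d t) \<in> borel_measurable (\<mu>\<theta> \<Otimes>\<^sub>M \<mu>\<delta>)"
    and O_lin: "bounded_linear \<O>"
    and M_meas: "\<M> \<in> borel_measurable \<mu>\<theta>"
    and \<Sigma>_sym: "transpose \<Sigma> = \<Sigma>"
    and \<Sigma>_pd: "\<And>x. x \<noteq> 0 \<Longrightarrow> 0 < x \<bullet> (\<Sigma> *v x)"
    and \<Phi>app_def: "\<And>t. \<Phi>app t = 1/2 * wnorm2 (matrix_inv \<Sigma>) (y - \<O> (\<M> t))"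
    and \<Phi>joint_def: "\<And>t d. \<Phi>joint (t, d) =
                       1/2 * wnorm2 (matrix_inv \<Sigma>) (y - \<O> (\<M> t) - \<O> (ev d t))"
    and app_L1: "integrable \<mu>\<theta> \<Phi>app"
    and joint_L1: "integrable (\<mu>\<theta> \<Otimes>\<^sub>M \<mu>\<delta>) \<Phi>joint"
  shows "let nJ = (\<integral>z. \<bar>\<Phi>joint z\<bar> \<partial>(\<mu>\<theta> \<Otimes>\<^sub>M \<mu>\<delta>));
             nA = (\<integral>t. \<bar>\<Phi>app t\<bar> \<partial>\<mu>\<theta>);
             C = sqrt 2 * exp (2 * nJ + 2 * nA) * (sqrt nJ + sqrt nA);
             F = (\<lambda>(t, d). wnorm2 (matrix_inv \<Sigma>) (\<O> (ev d t)));
             post_app = reweight (\<mu>\<theta> \<Otimes>\<^sub>M \<mu>\<delta>) (\<lambda>(t, d). \<Phi>app t);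
             post_joint = reweight (\<mu>\<theta> \<Otimes>\<^sub>M \<mu>\<delta>) \<Phi>joint
         in max (KL_div post_app post_joint) (KL_div post_joint post_app)
            \<le> (if integrable (\<mu>\<theta> \<Otimes>\<^sub>M \<mu>\<delta>) F
                then ereal (C * sqrt (\<integral>z. \<bar>F z\<bar> \<partial>(\<mu>\<theta> \<Otimes>\<^sub>M \<mu>\<delta>)))
                else \<infinity>)"
proof -
  \<comment> \<open>Only positive definiteness of \<open>\<Sigma>\<close> and integrability of the misfits enter.\<close>
  interpret \<delta>: prob_space \<mu>\<delta> by (rule prob_\<delta>)
  interpret prob_space "\<mu>\<theta> \<Otimes>\<^sub>M \<mu>\<delta>" by (rule prob_space_pair[OF prob_\<theta> prob_\<delta>])
  define F where "F = (\<lambda>(t, d). wnorm2 (matrix_inv \<Sigma>) (\<O> (ev d t)))"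
  have pd: "\<And>x. x \<noteq> 0 \<Longrightarrow> 0 < wnorm2 (matrix_inv \<Sigma>) x"
    by (rule wnorm2_matrix_inv_pos[OF \<Sigma>_pd])
  note nonneg = wnorm2_nonneg[OF pd]
  have lift: "(\<lambda>(t, d). \<Phi>app t) = (\<lambda>z. \<Phi>app (fst z))" by auto
  have app: "integrable (\<mu>\<theta> \<Otimes>\<^sub>M \<mu>\<delta>) (\<lambda>z. \<Phi>app (fst z))" "\<And>z. 0 \<le> \<Phi>app (fst z)"
    using \<delta>.integrable_pair_fst[OF app_L1] by (auto simp: \<Phi>app_def nonneg)
  have joint: "\<And>z. 0 \<le> \<Phi>joint z" by (auto simp: \<Phi>joint_def nonneg)
  have F: "\<And>z. 0 \<le> F z" by (auto simp: F_def nonneg)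
  have close: "\<bar>\<Phi>joint z - \<Phi>app (fst z)\<bar>
      \<le> sqrt (F z) * (sqrt (\<Phi>joint z) + sqrt (\<Phi>app (fst z))) / sqrt 2" for z
    using abs_half_wnorm2_diff_le[OF pd]
    by (cases z) (simp add: F_def \<Phi>app_def \<Phi>joint_def)
  have "(\<integral>z. \<Phi>app (fst z) \<partial>(\<mu>\<theta> \<Otimes>\<^sub>M \<mu>\<delta>)) = (\<integral>t. \<bar>\<Phi>app t\<bar> \<partial>\<mu>\<theta>)"
    using \<delta>.integral_pair_fst[OF app_L1] by (simp add: \<Phi>app_def nonneg)
  then show ?thesis
    using max_KL_div_reweight_le[OF joint_L1 joint app _ F close] joint F
    by (auto simp: Let_def lift F_def[symmetric] max.commute)
qed

end
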